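(* Let $D,\widetilde D,K,\widetilde K$ be nonempty sets, $\emptyset\ne F\subseteq\mathcal{F}(D,K)$, $\emptyset\ne\widetilde F\subseteq\mathcal{F}(\widetilde D,\widetilde K)$, and let $\Gamma:F\to\widetilde F$ be a mapping for which there exist $\kappa,m^*\in\mathbb{N}$ and mappings $\eta_j:\widetilde D\to D$ ($j=0,\dots,\kappa-1$), $\beta:K\to\mathbb{Z}[0,2^{m^*})$, $\rho:\widetilde D\times\mathbb{Z}[0,2^{m^*})^\kappa\to\widetilde K$ such that for all $f\in F$, $s\in\widetilde D$, $$(\Gamma(f))(s)=\rho\big(s,\beta(f(\eta_0(s))),\dots,\beta(f(\eta_{\kappa-1}(s)))\big).$$ Then for each quantum query $\widetilde Q$ on $\widetilde F$ there is a quantum algorithm without measurement $B$ on $F$ such that $n_q(B)=2\kappa$, $m:=m(B)>\widetilde m:=m(\widetilde Q)$, and for all $f\in F$ and $x\in\mathbb{Z}[0,2^{\widetilde m})$, $$(\widetilde Q_{\Gamma(f)}|x\rangle)|0\rangle_{m-\widetilde m}=B_f|x\rangle|0\rangle_{m-\widetilde m},$$ where $|0\rangle_{m-\widetilde m}$ is the zero basis state of the last $m-\widetilde m$ qubits (so $H_m=H_{\widetilde m}\otimes H_{m-\widetilde m}$).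
   Context: For nonempty sets $D',K'$, $\mathcal{F}(D',K')$ is the set of all functions $D'\to K'$; $\mathbb{Z}[0,N)=\{0,\dots,N-1\}$. $H_m=(\mathbb{C}^2)^{\otimes m}$ has canonical basis $|i\rangle$, $i\in\mathbb{Z}[0,2^m)$, where $|i\rangle=e_{j_0}\otimes\cdots\otimes e_{j_{m-1}}$ with $i=\sum_k j_k2^{m-1-k}$. For nonempty $F\subseteq\mathcal{F}(D',K')$, a quantum query on $F$ is a tuple $Q=(m,m',m'',Z,\tau,\beta)$ with $m,m',m''\in\mathbb{N}$, $m'+m''\le m$, $\emptyset\ne Z\subseteq\mathbb{Z}[0,2^{m'})$, $\tau:Z\to D'$, $\beta:K'\to\mathbb{Z}[0,2^{m''})$; $m(Q)=m$. For $f\in F$, $Q_f$ is the unitary on $H_m=H_{m'}\otimes H_{m''}\otimes H_{m-m'-m''}$ with $Q_f|i\rangle|x\rangle|y\rangle=|i\rangle|x\oplus\beta(f(\tau(i)))\rangle|y\rangle$ if $i\in Z$ and $=|i\rangle|x\rangle|y\rangle$ otherwise ($\oplus$ = addition mod $2^{m''}$). A quantum algorithm on $F$ with no measurement is $B=(Q,(U_j)_{j=0}^n)$, $n\in\mathbb{N}_0$, $Q$ a quantum query on $F$, $U_j$ unitary operators on $H_{m(Q)}$; $B_f=U_nQ_fU_{n-1}\cdots U_1Q_fU_0$, $n_q(B)=n$ (number of queries), $m(B)=m(Q)$. *)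

theory Defs
  imports "Jordan_Normal_Form.Schur_Decomposition" "HOL-Library.FuncSet"
begin

text \<open>The space H_m is modelled as complex vectors of dimension 2^m; operators as
  2^m x 2^m complex matrices. The canonical basis vector |i> is unit_vec (2^m) i.\<close>

definition ket :: "nat \<Rightarrow> nat \<Rightarrow> complex vec" where
  "ket N i = unit_vec N i"

definition unitary_mat :: "nat \<Rightarrow> complex mat \<Rightarrow> bool" where
  "unitary_mat N U \<longleftrightarrow> U \<in> carrier_mat N N \<and> mat_adjoint U * U = 1\<^sub>m N \<and> U * mat_adjoint U = 1\<^sub>m N"

text \<open>pad k v = v tensor |0>_k (zero basis state on k extra trailing qubits):
  the basis index of |i>|j> is i * 2^k + j.\<close>
definition pad :: "nat \<Rightarrow> complex vec \<Rightarrow> complex vec" where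
  "pad k v = vec (dim_vec v * 2 ^ k) (\<lambda>n. if n mod 2 ^ k = 0 then v $ (n div 2 ^ k) else 0)"

type_synonym ('d, 'k) qquery = "nat \<times> nat \<times> nat \<times> nat set \<times> (nat \<Rightarrow> 'd) \<times> ('k \<Rightarrow> nat)"

definition is_query :: "'d set \<Rightarrow> 'k set \<Rightarrow> ('d, 'k) qquery \<Rightarrow> bool" where
  "is_query D' K' Q = (case Q of (m, m1, m2, Z, \<tau>, \<beta>) \<Rightarrow>
      m \<ge> 1 \<and> m1 \<ge> 1 \<and> m2 \<ge> 1 \<and> m1 + m2 \<le> m \<and> Z \<noteq> {} \<and> Z \<subseteq> {..<2 ^ m1}
      \<and> \<tau> \<in> Z \<rightarrow> D' \<and> \<beta> \<in> K' \<rightarrow> {..<2 ^ m2})"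

definition m_query :: "('d, 'k) qquery \<Rightarrow> nat" where
  "m_query Q = fst Q"

text \<open>Permutation of basis indices realised by Q_f:
  |i>|x>|y> maps to |i>|x + beta(f(tau i)) mod 2^m''>|y> if i in Z.\<close>
definition query_perm :: "('d, 'k) qquery \<Rightarrow> ('d \<Rightarrow> 'k) \<Rightarrow> nat \<Rightarrow> nat" where
  "query_perm Q f n = (case Q of (m, m1, m2, Z, \<tau>, \<beta>) \<Rightarrow>
      (let r = m - m1 - m2; i = n div 2 ^ (m - m1); x = (n div 2 ^ r) mod 2 ^ m2; y = n mod 2 ^ r
       in if i \<in> Z then i * 2 ^ (m - m1) + ((x + \<beta> (f (\<tau> i))) mod 2 ^ m2) * 2 ^ r + y else n))"

definition query_mat :: "('d, 'k) qquery \<Rightarrow> ('d \<Rightarrow> 'k) \<Rightarrow> complex mat" where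
  "query_mat Q f = mat (2 ^ m_query Q) (2 ^ m_query Q)
      (\<lambda>(a, b). if a = query_perm Q f b then 1 else 0)"

type_synonym ('d, 'k) qalg = "('d, 'k) qquery \<times> complex mat list"

definition is_alg :: "'d set \<Rightarrow> 'k set \<Rightarrow> ('d, 'k) qalg \<Rightarrow> bool" where
  "is_alg D' K' B = (is_query D' K' (fst B) \<and> snd B \<noteq> []
      \<and> (\<forall>U \<in> set (snd B). unitary_mat (2 ^ m_query (fst B)) U))"

definition n_q :: "('d, 'k) qalg \<Rightarrow> nat" where
  "n_q B = length (snd B) - 1"

definition m_alg :: "('d, 'k) qalg \<Rightarrow> nat" where
  "m_alg B = m_query (fst B)"

text \<open>B_f = U_n Q_f U_{n-1} ... U_1 Q_f U_0.\<close>
definition alg_mat :: "('d, 'k) qalg \<Rightarrow> ('d \<Rightarrow> 'k) \<Rightarrow> complex mat" where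
  "alg_mat B f = foldl (\<lambda>A U. U * query_mat (fst B) f * A) (hd (snd B)) (tl (snd B))"

end

theory Submission
  imports Defs
begin

(* The unitaries of the simulating algorithm B, like its query, permute the computational basis, so
   B can be followed on basis states.  Besides the input x of the target query, B uses a counter
   register j of kappa qubits and kappa answer registers of m* qubits, the first of which is the
   answer register of its query.  The query with counter j asks f at eta_j(s), s being the point
   queried by the target query on x, and adds the answer to the first answer register, which is
   empty at that moment; between queries the answer registers are rotated and the counter is
   advanced.  After kappa queries the registers hold the argument list of rho, so the basis
   permutation of the target query for Gamma(f) can be applied to x.  The remaining kappa queries
   erase the answers again: negating the first register before each query turns the addition
   performed by the query into a subtraction. *)

lemma bij_betw_fst_dependent:
  assumes "bij_betw h B B'" and "\<And>b. b \<in> B \<Longrightarrow> bij_betw (g b) A A'"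
  shows "bij_betw (\<lambda>(a, b). (g b a, h b)) (A \<times> B) (A' \<times> B')"
proof -
  have "inj_on (\<lambda>(a, b). (g b a, h b)) (A \<times> B)"
    using assms by (auto simp: inj_on_def bij_betw_def)
  moreover have "(\<lambda>(a, b). (g b a, h b)) ` (A \<times> B) = A' \<times> B'"
    using assms by (fastforce simp: bij_betw_def image_iff)
  ultimately show ?thesis by (simp add: bij_betw_def)
qed

lemma bij_betw_snd_dependent:
  assumes "bij_betw h A A'" and "\<And>a. a \<in> A \<Longrightarrow> bij_betw (g a) B B'"
  shows "bij_betw (\<lambda>(a, b). (h a, g a b)) (A \<times> B) (A' \<times> B')"
proof -
  have "inj_on (\<lambda>(a, b). (h a, g a b)) (A \<times> B)"
    using assms by (auto simp: inj_on_def bij_betw_def)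
  moreover have "(\<lambda>(a, b). (h a, g a b)) ` (A \<times> B) = A' \<times> B'"
    using assms by (fastforce simp: bij_betw_def image_iff)
  ultimately show ?thesis by (simp add: bij_betw_def)
qed

lemma bij_betw_conjugate:
  assumes e: "bij_betw e S T" and \<phi>: "bij_betw \<phi> S S"
    and commute: "\<And>s. s \<in> S \<Longrightarrow> p (e s) = e (\<phi> s)"
  shows "bij_betw p T T"
proof -
  have "bij_betw (e \<circ> (\<phi> \<circ> inv_into S e)) T T"
    using bij_betw_trans[OF bij_betw_trans[OF bij_betw_inv_into[OF e] \<phi>] e] .
  moreover have "p n = (e \<circ> (\<phi> \<circ> inv_into S e)) n" if "n \<in> T" for n
    using commute[of "inv_into S e n"] bij_betw_inv_into_right[OF e that]
      bij_betw_apply[OF bij_betw_inv_into[OF e] that] by simp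
  ultimately show ?thesis using bij_betw_cong by blast
qed

lemma bij_betw_add_mod:
  fixes N c :: nat
  assumes "0 < N"
  shows "bij_betw (\<lambda>a. (a + c) mod N) {..<N} {..<N}"
proof -
  have "inj_on (\<lambda>a. (a + c) mod N) {..<N}"
  proof (rule inj_onI)
    fix a b assume "a \<in> {..<N}" "b \<in> {..<N}" and "(a + c) mod N = (b + c) mod N"
    then have "a mod N = b mod N" unfolding mod_eq_iff_dvd_symdiff_nat by simp
    with \<open>a \<in> {..<N}\<close> \<open>b \<in> {..<N}\<close> show "a = b" by simp
  qed
  then show ?thesis using assms by (simp add: bij_betw_def endo_inj_surj image_subset_iff)
qed

section \<open>Basis indices of tensor products\<close>

text \<open>\<open>tensor_index q (a, b)\<close> is the basis index of \<open>|a>|b>\<close> for \<open>|b>\<close> in \<open>H_q\<close>.\<close>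

definition tensor_index :: "nat \<Rightarrow> nat \<times> nat \<Rightarrow> nat" where
  "tensor_index q = (\<lambda>(a, b). a * 2 ^ q + b)"

lemma tensor_index_less:
  assumes "a < 2 ^ p" and "b < 2 ^ q"
  shows "tensor_index q (a, b) < 2 ^ (p + q)"
proof -
  have "a * 2 ^ q + b < (a + 1) * 2 ^ q" using assms(2) by simp
  also have "\<dots> \<le> 2 ^ p * 2 ^ q" using assms(1) by (intro mult_le_mono1) simp
  finally show ?thesis by (simp add: tensor_index_def power_add)
qed

lemma tensor_index_div [simp]: "b < 2 ^ q \<Longrightarrow> tensor_index q (a, b) div 2 ^ q = a"
  and tensor_index_mod [simp]: "b < 2 ^ q \<Longrightarrow> tensor_index q (a, b) mod 2 ^ q = b"
  by (simp_all add: tensor_index_def)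

lemma tensor_index_div_mod: "tensor_index q (n div 2 ^ q, n mod 2 ^ q) = n"
  by (simp add: tensor_index_def div_mult_mod_eq)

lemma tensor_index_assoc:
  "tensor_index (q + r) (a, tensor_index r (b, c)) = tensor_index r (tensor_index q (a, b), c)"
  by (simp add: tensor_index_def power_add algebra_simps)

lemma tensor_index_split:
  "tensor_index (q + r) (n div 2 ^ (q + r), tensor_index r (n div 2 ^ r mod 2 ^ q, n mod 2 ^ r)) = n"
proof -
  have "n mod (2 ^ r * 2 ^ q) = 2 ^ r * (n div 2 ^ r mod 2 ^ q) + n mod 2 ^ r"
    by (rule mod_mult2_eq)
  then have "tensor_index r (n div 2 ^ r mod 2 ^ q, n mod 2 ^ r) = n mod 2 ^ (q + r)"
    by (simp add: tensor_index_def power_add mult.commute)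
  then show ?thesis by (simp add: tensor_index_div_mod)
qed

lemma bij_betw_tensor_index:
  "bij_betw (tensor_index q) ({..<2 ^ p} \<times> {..<2 ^ q}) {..<2 ^ (p + q)}"
proof (rule bij_betw_byWitness[where f' = "\<lambda>n::nat. (n div 2 ^ q, n mod 2 ^ q)"])
  show "(\<lambda>n::nat. (n div 2 ^ q, n mod 2 ^ q)) ` {..<2 ^ (p + q)} \<subseteq> {..<2 ^ p} \<times> {..<2 ^ q}"
    by (auto simp: power_add less_mult_imp_div_less)
qed (auto simp: tensor_index_less tensor_index_div_mod)

lemma pad_unit_vec:
  assumes y: "y < N"
  shows "pad k (unit_vec N y) = unit_vec (N * 2 ^ k) (y * 2 ^ k)"
proof (rule eq_vecI)
  fix n assume "n < dim_vec (unit_vec (N * 2 ^ k) (y * 2 ^ k) :: complex vec)"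
  then have n: "n < N * 2 ^ k" by simp
  then have "n div 2 ^ k < N" by (simp add: less_mult_imp_div_less)
  moreover have "(n mod 2 ^ k = 0 \<and> n div 2 ^ k = y) = (n = y * 2 ^ k)"
    using div_mult_mod_eq[of n "2 ^ k"] by auto
  ultimately show "pad k (unit_vec N y) $ n = unit_vec (N * 2 ^ k) (y * 2 ^ k) $ n"
    using n y by (auto simp: pad_def)
qed (simp add: pad_def)

definition registers :: "nat \<Rightarrow> nat \<Rightarrow> nat list set" where
  "registers w k = {ds. set ds \<subseteq> {..<2 ^ w} \<and> length ds = k}"

fun register_index :: "nat \<Rightarrow> nat list \<Rightarrow> nat" where
  "register_index w [] = 0"
| "register_index w (d # ds) = tensor_index (w * length ds) (d, register_index w ds)"

lemma finite_registers: "finite (registers w k)"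
  unfolding registers_def by (rule finite_lists_length_eq) simp

lemma register_index_replicate_0 [simp]: "register_index w (replicate k 0) = 0"
  by (induction k) (simp_all add: tensor_index_def)

lemma bij_betw_register_index: "bij_betw (register_index w) (registers w k) {..<2 ^ (w * k)}"
proof (induction k)
  case 0
  have "registers w 0 = {[]}" by (auto simp: registers_def)
  then show ?case by (auto simp: bij_betw_def)
next
  case (Suc k)
  have cons: "bij_betw (\<lambda>(d, ds). d # ds) ({..<2 ^ w} \<times> registers w k) (registers w (Suc k))"
    by (rule bij_betw_byWitness[where f' = "\<lambda>ds. (hd ds, tl ds)"])
       (auto simp: registers_def length_Suc_conv)
  have bij: "bij_betw (tensor_index (w * k) \<circ> map_prod id (register_index w))
      ({..<2 ^ w} \<times> registers w k) {..<2 ^ (w + w * k)}"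
    using bij_betw_map_prod[OF bij_betw_id Suc.IH] bij_betw_tensor_index
    by (rule bij_betw_trans)
  have eq: "(register_index w \<circ> (\<lambda>(d, ds). d # ds)) p
      = (tensor_index (w * k) \<circ> map_prod id (register_index w)) p"
    if "p \<in> {..<2 ^ w} \<times> registers w k" for p
    using that by (auto simp: registers_def)
  have "bij_betw (register_index w \<circ> (\<lambda>(d, ds). d # ds))
      ({..<2 ^ w} \<times> registers w k) {..<2 ^ (w + w * k)}"
    by (rule bij_betw_cong[THEN iffD2, OF _ bij]) (rule eq)
  then show ?case using bij_betw_comp_iff[OF cons, of "register_index w"] by simp
qed

section \<open>Queries and algorithms as basis permutations\<close>

lemma query_perm_tensor_index:
  assumes m: "m = m1 + m2 + r" and a: "a < 2 ^ m2" and y: "y < 2 ^ r"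
  shows "query_perm (m, m1, m2, Z, \<tau>, \<beta>) g (tensor_index (m2 + r) (i, tensor_index r (a, y)))
    = tensor_index (m2 + r) (i, tensor_index r (if i \<in> Z then (a + \<beta> (g (\<tau> i))) mod 2 ^ m2 else a, y))"
proof -
  define n where "n = tensor_index (m2 + r) (i, tensor_index r (a, y))"
  have "n div 2 ^ (m2 + r) = i"
    using tensor_index_less[OF a y] by (simp add: n_def)
  moreover have "n = tensor_index r (tensor_index m2 (i, a), y)"
    unfolding n_def by (rule tensor_index_assoc)
  then have "n div 2 ^ r mod 2 ^ m2 = a" and "n mod 2 ^ r = y"
    using a y by simp_all
  moreover have "n = i * 2 ^ (m2 + r) + (a * 2 ^ r + y)"
    by (simp add: n_def tensor_index_def)
  moreover have "m - m1 = m2 + r" and "m - (m1 + m2) = r" using m by simp_all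
  ultimately show ?thesis
    unfolding n_def[symmetric] by (simp add: query_perm_def Let_def tensor_index_def)
qed

lemma query_perm_div:
  assumes "m1 + m2 \<le> m"
  shows "query_perm (m, m1, m2, Z, \<tau>, \<beta>) g n div 2 ^ (m - m1) = n div 2 ^ (m - m1)"
proof -
  define r where "r = m - m1 - m2"
  have m: "m = m1 + m2 + r" and m1: "m - m1 = m2 + r" using assms by (simp_all add: r_def)
  define i a y where "i = n div 2 ^ (m2 + r)" and "a = n div 2 ^ r mod 2 ^ m2" and "y = n mod 2 ^ r"
  have a: "a < 2 ^ m2" and y: "y < 2 ^ r" by (simp_all add: a_def y_def)
  have n: "n = tensor_index (m2 + r) (i, tensor_index r (a, y))"
    unfolding i_def a_def y_def by (rule tensor_index_split[symmetric])
  let ?a' = "if i \<in> Z then (a + \<beta> (g (\<tau> i))) mod 2 ^ m2 else a"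
  have a': "?a' < 2 ^ m2" using a by simp
  have "query_perm (m, m1, m2, Z, \<tau>, \<beta>) g n = tensor_index (m2 + r) (i, tensor_index r (?a', y))"
    unfolding n by (rule query_perm_tensor_index[OF m a y])
  then show ?thesis
    unfolding m1 using n tensor_index_less[OF a y] tensor_index_less[OF a' y] by simp
qed

lemma bij_betw_query_perm:
  assumes "m1 + m2 \<le> m"
  shows "bij_betw (query_perm (m, m1, m2, Z, \<tau>, \<beta>) g) {..<2 ^ m} {..<2 ^ m}"
proof -
  define r where "r = m - m1 - m2"
  have m: "m = m1 + m2 + r" using assms by (simp add: r_def)
  let ?S = "{..<2 ^ m1} \<times> {..<2 ^ m2} \<times> {..<2 ^ r}"
  let ?shift = "\<lambda>i a. if i \<in> Z then (a + \<beta> (g (\<tau> i))) mod 2 ^ m2 else a"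
  have "bij_betw (tensor_index (m2 + r) \<circ> map_prod id (tensor_index r)) ?S {..<2 ^ (m1 + (m2 + r))}"
    by (rule bij_betw_trans[OF bij_betw_map_prod[OF bij_betw_id bij_betw_tensor_index]
          bij_betw_tensor_index])
  then have e: "bij_betw (tensor_index (m2 + r) \<circ> map_prod id (tensor_index r)) ?S {..<2 ^ m}"
    by (simp add: m add.assoc)
  have "bij_betw (?shift i) {..<2 ^ m2} {..<2 ^ m2}" for i
    using bij_betw_add_mod[of "2 ^ m2"] bij_betw_id[unfolded id_def] by (cases "i \<in> Z") simp_all
  then have "bij_betw (\<lambda>(i, p). (id i, map_prod (?shift i) id p)) ?S ?S"
    by (intro bij_betw_snd_dependent bij_betw_id bij_betw_map_prod)
  from e this show ?thesis
    by (rule bij_betw_conjugate) (auto simp: query_perm_tensor_index[OF m])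
qed

lemma query_perm_cong:
  assumes "n div 2 ^ (m - m1) \<in> Z \<Longrightarrow> g (\<tau> (n div 2 ^ (m - m1))) = g' (\<tau> (n div 2 ^ (m - m1)))"
  shows "query_perm (m, m1, m2, Z, \<tau>, \<beta>) g n = query_perm (m, m1, m2, Z, \<tau>, \<beta>) g' n"
  using assms by (auto simp: query_perm_def Let_def)

definition perm_mat :: "nat \<Rightarrow> (nat \<Rightarrow> nat) \<Rightarrow> complex mat" where
  "perm_mat N p = mat N N (\<lambda>(a, b). if a = p b then 1 else 0)"

lemma query_mat_eq_perm_mat: "query_mat Q f = perm_mat (2 ^ m_query Q) (query_perm Q f)"
  unfolding query_mat_def perm_mat_def ..

lemma perm_mat_cong: "(\<And>n. n < N \<Longrightarrow> p n = q n) \<Longrightarrow> perm_mat N p = perm_mat N q"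
  by (auto simp: perm_mat_def)

lemma perm_mat_id: "perm_mat N id = 1\<^sub>m N"
  by (auto simp: perm_mat_def one_mat_def)

lemma perm_mat_mult:
  assumes "q \<in> {..<N} \<rightarrow> {..<N}"
  shows "perm_mat N p * perm_mat N q = perm_mat N (p \<circ> q)"
proof (rule eq_matI)
  fix a c assume "a < dim_row (perm_mat N (p \<circ> q))" and "c < dim_col (perm_mat N (p \<circ> q))"
  then have a: "a < N" and c: "c < N" by (simp_all add: perm_mat_def)
  have "(perm_mat N p * perm_mat N q) $$ (a, c)
      = (\<Sum>b<N. (if a = p b then 1 else 0) * (if b = q c then 1 else 0))"
    using a c by (simp add: perm_mat_def scalar_prod_def lessThan_atLeast0)
  also have "\<dots> = (\<Sum>b<N. if b = q c then (if a = p (q c) then 1 else 0) else 0)"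
    by (rule sum.cong) auto
  also have "\<dots> = (if a = p (q c) then 1 else 0)"
    using assms c by auto
  finally show "(perm_mat N p * perm_mat N q) $$ (a, c) = perm_mat N (p \<circ> q) $$ (a, c)"
    using a c by (simp add: perm_mat_def)
qed (simp_all add: perm_mat_def)

lemma perm_mat_mult_unit_vec:
  assumes "n < N" and "p n < N"
  shows "perm_mat N p *\<^sub>v unit_vec N n = unit_vec N (p n)"
proof (rule eq_vecI)
  fix a assume "a < dim_vec (unit_vec N (p n))"
  then have a: "a < N" by simp
  have "(perm_mat N p *\<^sub>v unit_vec N n) $ a
      = (\<Sum>b<N. (if a = p b then 1 else 0) * (if b = n then 1 else 0))"
    using a by (simp add: perm_mat_def scalar_prod_def lessThan_atLeast0 unit_vec_def)
  also have "\<dots> = (\<Sum>b<N. if b = n then (if a = p n then 1 else 0) else 0)"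
    by (rule sum.cong) auto
  also have "\<dots> = (if a = p n then 1 else 0)"
    using assms by simp
  finally show "(perm_mat N p *\<^sub>v unit_vec N n) $ a = unit_vec N (p n) $ a"
    using a assms by simp
qed (simp add: perm_mat_def)

lemma query_mat_mult_ket:
  assumes "m1 + m2 \<le> m" and "x < 2 ^ m"
  shows "query_mat (m, m1, m2, Z, \<tau>, \<beta>) g *\<^sub>v ket (2 ^ m) x
    = ket (2 ^ m) (query_perm (m, m1, m2, Z, \<tau>, \<beta>) g x)"
proof -
  have "query_perm (m, m1, m2, Z, \<tau>, \<beta>) g x < 2 ^ m"
    using bij_betw_apply[OF bij_betw_query_perm[OF assms(1)]] assms(2) by simp
  then show ?thesis
    by (simp add: query_mat_eq_perm_mat m_query_def ket_def perm_mat_mult_unit_vec[OF assms(2)])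
qed

lemma mat_adjoint_perm_mat:
  assumes "bij_betw p {..<N} {..<N}"
  shows "mat_adjoint (perm_mat N p) = perm_mat N (inv_into {..<N} p)"
proof (rule eq_matI)
  fix a b assume "a < dim_row (perm_mat N (inv_into {..<N} p))"
    and "b < dim_col (perm_mat N (inv_into {..<N} p))"
  then have a: "a < N" and b: "b < N" by (simp_all add: perm_mat_def)
  have "(b = p a) = (a = inv_into {..<N} p b)"
    using a b assms bij_betw_inv_into_left bij_betw_inv_into_right by fastforce
  then show "mat_adjoint (perm_mat N p) $$ (a, b) = perm_mat N (inv_into {..<N} p) $$ (a, b)"
    using a b by (simp add: mat_adjoint_def perm_mat_def mat_of_rows_index)
qed (simp_all add: mat_adjoint_def perm_mat_def)

lemma unitary_perm_mat:
  assumes p: "bij_betw p {..<N} {..<N}"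
  shows "unitary_mat N (perm_mat N p)"
proof -
  let ?p' = "inv_into {..<N} p"
  have p': "bij_betw ?p' {..<N} {..<N}" by (rule bij_betw_inv_into[OF p])
  have "perm_mat N ?p' * perm_mat N p = 1\<^sub>m N"
    using perm_mat_mult[of p N ?p'] bij_betw_apply[OF p] bij_betw_inv_into_left[OF p]
    by (simp add: Pi_iff perm_mat_id[symmetric] cong: perm_mat_cong)
  moreover have "perm_mat N p * perm_mat N ?p' = 1\<^sub>m N"
    using perm_mat_mult[of ?p' N p] bij_betw_apply[OF p'] bij_betw_inv_into_right[OF p]
    by (simp add: Pi_iff perm_mat_id[symmetric] cong: perm_mat_cong)
  moreover have "perm_mat N p \<in> carrier_mat N N" by (simp add: perm_mat_def)
  ultimately show ?thesis
    unfolding unitary_mat_def mat_adjoint_perm_mat[OF p] by blast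
qed

primrec alg_run :: "(nat \<Rightarrow> 'a \<Rightarrow> 'a) \<Rightarrow> ('a \<Rightarrow> 'a) \<Rightarrow> nat \<Rightarrow> 'a \<Rightarrow> 'a" where
  "alg_run U q 0 = U 0"
| "alg_run U q (Suc n) = U (Suc n) \<circ> q \<circ> alg_run U q n"

lemma alg_run_in:
  assumes "\<And>t. U t \<in> S \<rightarrow> S" and "q \<in> S \<rightarrow> S" and "s \<in> S"
  shows "alg_run U q n s \<in> S"
  using assms by (induction n) auto

lemma alg_run_conjugate:
  assumes "\<And>t s. s \<in> S \<Longrightarrow> \<sigma> t (e s) = e (U t s)" and "\<And>s. s \<in> S \<Longrightarrow> q (e s) = e (\<psi> s)"
    and "\<And>t. U t \<in> S \<rightarrow> S" and "\<psi> \<in> S \<rightarrow> S" and "s \<in> S"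
  shows "alg_run \<sigma> q n (e s) = e (alg_run U \<psi> n s)"
proof (induction n)
  case (Suc n)
  have "alg_run U \<psi> n s \<in> S" by (rule alg_run_in[OF assms(3-5)])
  then show ?case using Suc.IH assms(1,2,4) by auto
qed (simp add: assms(1,5))

lemma alg_mat_snoc:
  assumes "Us \<noteq> []"
  shows "alg_mat (Q, Us @ [U]) f = U * query_mat Q f * alg_mat (Q, Us) f"
  using assms by (simp add: alg_mat_def)

lemma alg_mat_perm_mat:
  assumes N: "N = 2 ^ m_query Q" and \<sigma>: "\<And>t. \<sigma> t \<in> {..<N} \<rightarrow> {..<N}"
    and q: "query_perm Q f \<in> {..<N} \<rightarrow> {..<N}"
  shows "alg_mat (Q, map (\<lambda>t. perm_mat N (\<sigma> t)) [0..<Suc n]) f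
    = perm_mat N (alg_run \<sigma> (query_perm Q f) n)"
proof (induction n)
  case 0
  show ?case by (simp add: alg_mat_def)
next
  case (Suc n)
  have run: "alg_run \<sigma> (query_perm Q f) n \<in> {..<N} \<rightarrow> {..<N}"
    by (intro Pi_I alg_run_in[OF \<sigma> q])
  let ?Us = "map (\<lambda>t. perm_mat N (\<sigma> t)) [0..<Suc n]"
  have split: "map (\<lambda>t. perm_mat N (\<sigma> t)) [0..<Suc (Suc n)] = ?Us @ [perm_mat N (\<sigma> (Suc n))]"
    by simp
  have "?Us \<noteq> []" by simp
  then have "alg_mat (Q, map (\<lambda>t. perm_mat N (\<sigma> t)) [0..<Suc (Suc n)]) f
      = perm_mat N (\<sigma> (Suc n)) * query_mat Q f * alg_mat (Q, ?Us) f"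
    unfolding split by (rule alg_mat_snoc)
  also have "\<dots> = perm_mat N (\<sigma> (Suc n)) * perm_mat N (query_perm Q f)
      * perm_mat N (alg_run \<sigma> (query_perm Q f) n)"
    unfolding Suc.IH query_mat_eq_perm_mat N[symmetric] ..
  also have "\<dots> = perm_mat N (alg_run \<sigma> (query_perm Q f) (Suc n))"
    by (simp add: perm_mat_mult[OF q] perm_mat_mult[OF run])
  finally show ?case .
qed

section \<open>Operations on answer registers\<close>

lemma diff_mod_involution:
  fixes d N :: nat
  assumes "d < N"
  shows "(N - (N - d) mod N) mod N = d"
  using assms by (cases "d = 0") simp_all

lemma diff_mod_add_self:
  fixes a N :: nat
  assumes "a < N"
  shows "((N - a) mod N + a) mod N = 0"
  using assms by (cases "a = 0") simp_all

fun negate_hd :: "nat \<Rightarrow> nat list \<Rightarrow> nat list" where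
  "negate_hd w [] = []"
| "negate_hd w (d # ds) = (2 ^ w - d) mod 2 ^ w # ds"

lemma negate_hd_replicate_0 [simp]: "negate_hd w (replicate k 0) = replicate k 0"
  by (cases k) simp_all

lemma bij_betw_negate_hd: "bij_betw (negate_hd w) (registers w k) (registers w k)"
proof -
  have involution: "negate_hd w (negate_hd w ds) = ds" if "ds \<in> registers w k" for ds
    using that by (cases ds) (simp_all add: registers_def diff_mod_involution)
  have into: "negate_hd w ` registers w k \<subseteq> registers w k"
  proof (rule image_subsetI)
    fix ds assume "ds \<in> registers w k"
    then show "negate_hd w ds \<in> registers w k" by (cases ds) (auto simp: registers_def)
  qed
  show ?thesis by (rule bij_betw_byWitness) (use involution into in auto)
qed

lemma bij_betw_rotate1: "bij_betw rotate1 (registers w k) (registers w k)"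
proof -
  have into: "rotate1 ` registers w k \<subseteq> registers w k" by (auto simp: registers_def)
  have inj: "inj_on rotate1 (registers w k)" using inj_rotate1 by (rule inj_on_subset) simp
  show ?thesis
    unfolding bij_betw_def using endo_inj_surj[OF finite_registers into inj] inj by simp
qed

definition cycle_succ :: "nat \<Rightarrow> nat \<Rightarrow> nat" where
  "cycle_succ k j = (if j < k then Suc j mod k else j)"

lemma bij_betw_cycle_succ:
  assumes "k \<le> N"
  shows "bij_betw (cycle_succ k) {..<N} {..<N}"
proof -
  have "inj_on (cycle_succ k) {..<N}"
  proof (rule inj_onI)
    fix a b assume "cycle_succ k a = cycle_succ k b"
    then show "a = b"
      by (cases "a < k"; cases "b < k") (auto simp: cycle_succ_def mod_Suc split: if_splits)
  qed
  moreover have "cycle_succ k ` {..<N} \<subseteq> {..<N}"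
    using assms by (auto simp: cycle_succ_def mod_Suc)
  ultimately show ?thesis by (simp add: bij_betw_def endo_inj_surj)
qed

lemma rotate1_fill_register:
  fixes v :: "nat list"
  assumes "t < length v" and "v ! t < 2 ^ w"
  shows "rotate1 ((hd (replicate (length v - t) 0 @ take t v) + v ! t) mod 2 ^ w
      # tl (replicate (length v - t) 0 @ take t v)) = replicate (length v - Suc t) 0 @ take (Suc t) v"
proof -
  have "length v - t = Suc (length v - Suc t)" using assms(1) by simp
  then show ?thesis using assms by (simp add: take_Suc_conv_app_nth)
qed

lemma rotate1_clear_register:
  fixes v :: "nat list"
  assumes "t < length v" and "v ! t < 2 ^ w"
  shows "rotate1 ((hd (negate_hd w (drop t v @ replicate t 0)) + v ! t) mod 2 ^ w
      # tl (negate_hd w (drop t v @ replicate t 0))) = drop (Suc t) v @ replicate (Suc t) 0"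
  using assms by (simp add: Cons_nth_drop_Suc[symmetric] diff_mod_add_self replicate_append_same)

section \<open>The simulating algorithm\<close>

locale query_simulation =
  fixes mt mt1 mt2 :: nat and Zt :: "nat set" and \<tau>t :: "nat \<Rightarrow> 'e" and \<beta>t :: "'l \<Rightarrow> nat"
    and \<kappa> w :: nat and \<eta> :: "nat \<Rightarrow> 'e \<Rightarrow> 'd" and \<beta> :: "'k \<Rightarrow> nat"
    and \<rho> :: "'e \<Rightarrow> nat list \<Rightarrow> 'l"
  assumes target_layout: "mt1 + mt2 \<le> mt" and \<kappa>_pos: "0 < \<kappa>"
begin

abbreviation target_query :: "('e, 'l) qquery" where
  "target_query \<equiv> (mt, mt1, mt2, Zt, \<tau>t, \<beta>t)"

definition target_index :: "nat \<Rightarrow> nat" where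
  "target_index x = x div 2 ^ (mt - mt1)"

definition sim_qubits :: nat where
  "sim_qubits = mt + \<kappa> + w * \<kappa>"

definition sim_states :: "(nat \<times> nat \<times> nat list) set" where
  "sim_states = {..<2 ^ mt} \<times> {..<2 ^ \<kappa>} \<times> registers w \<kappa>"

definition state_index :: "nat \<times> nat \<times> nat list \<Rightarrow> nat" where
  "state_index = (\<lambda>(x, j, ds).
     tensor_index (\<kappa> + w * \<kappa>) (x, tensor_index (w * \<kappa>) (j, register_index w ds)))"

definition sim_query :: "('d, 'k) qquery" where
  "sim_query = (sim_qubits, mt + \<kappa>, w,
     {i. i < 2 ^ (mt + \<kappa>) \<and> target_index (i div 2 ^ \<kappa>) \<in> Zt \<and> i mod 2 ^ \<kappa> < \<kappa>},
     \<lambda>i. \<eta> (i mod 2 ^ \<kappa>) (\<tau>t (target_index (i div 2 ^ \<kappa>))), \<beta>)"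

definition sim_query_step :: "('d \<Rightarrow> 'k) \<Rightarrow> nat \<times> nat \<times> nat list \<Rightarrow> nat \<times> nat \<times> nat list" where
  "sim_query_step f = (\<lambda>(x, j, ds). (x, j,
     if target_index x \<in> Zt \<and> j < \<kappa>
     then (hd ds + \<beta> (f (\<eta> j (\<tau>t (target_index x))))) mod 2 ^ w # tl ds else ds))"

text \<open>Negating the first answer register is harmless in the rounds before round \<open>\<kappa>\<close>,
  where it holds \<open>0\<close>.\<close>

definition sim_step :: "nat \<Rightarrow> nat \<times> nat \<times> nat list \<Rightarrow> nat \<times> nat \<times> nat list" where
  "sim_step t = (\<lambda>(x, j, ds). if t = 0 then (x, j, ds) else
     (if t = \<kappa> then query_perm target_query (\<lambda>s. \<rho> s (rotate1 ds)) x else x,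
      cycle_succ \<kappa> j, negate_hd w (rotate1 ds)))"

definition sim_perm :: "nat \<Rightarrow> nat \<Rightarrow> nat" where
  "sim_perm t = state_index \<circ> sim_step t \<circ> inv_into sim_states state_index"

definition sim_alg :: "('d, 'k) qalg" where
  "sim_alg = (sim_query, map (\<lambda>t. perm_mat (2 ^ sim_qubits) (sim_perm t)) [0..<Suc (2 * \<kappa>)])"

lemma bij_betw_state_index: "bij_betw state_index sim_states {..<2 ^ sim_qubits}"
proof -
  have "bij_betw (tensor_index (w * \<kappa>) \<circ> map_prod id (register_index w))
      ({..<2 ^ \<kappa>} \<times> registers w \<kappa>) {..<2 ^ (\<kappa> + w * \<kappa>)}"
    by (rule bij_betw_trans[OF bij_betw_map_prod[OF bij_betw_id bij_betw_register_index]
        bij_betw_tensor_index])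
  from bij_betw_trans[OF bij_betw_map_prod[OF bij_betw_id this] bij_betw_tensor_index]
  have "bij_betw (tensor_index (\<kappa> + w * \<kappa>) \<circ> map_prod id (tensor_index (w * \<kappa>) \<circ> map_prod id (register_index w)))
      sim_states {..<2 ^ sim_qubits}"
    by (simp add: sim_states_def sim_qubits_def add.assoc)
  then show ?thesis
    by (rule bij_betw_cong[THEN iffD2, rotated]) (auto simp: state_index_def)
qed

lemma bij_betw_sim_step: "bij_betw (sim_step t) sim_states sim_states"
proof (cases "t = 0")
  case True
  then show ?thesis by (simp add: sim_step_def bij_betw_def inj_on_def case_prod_beta)
next
  case False
  let ?g = "\<lambda>(j::nat, ds). if t = \<kappa> then query_perm target_query (\<lambda>s. \<rho> s (rotate1 ds)) else id"
  let ?h = "map_prod (cycle_succ \<kappa>) (negate_hd w \<circ> rotate1)"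
  have "bij_betw ?h ({..<2 ^ \<kappa>} \<times> registers w \<kappa>) ({..<2 ^ \<kappa>} \<times> registers w \<kappa>)"
    using bij_betw_cycle_succ[OF less_imp_le[OF less_exp]]
      bij_betw_trans[OF bij_betw_rotate1 bij_betw_negate_hd]
    by (rule bij_betw_map_prod)
  moreover have "bij_betw (?g b) {..<2 ^ mt} {..<2 ^ mt}" for b
    by (cases b) (simp add: bij_betw_query_perm[OF target_layout])
  ultimately have "bij_betw (\<lambda>(a, b). (?g b a, ?h b)) sim_states sim_states"
    unfolding sim_states_def by (rule bij_betw_fst_dependent)
  moreover have "sim_step t = (\<lambda>(a, b). (?g b a, ?h b))"
    using False by (auto simp: sim_step_def fun_eq_iff)
  ultimately show ?thesis by simp
qed

lemma sim_perm_state_index: "s \<in> sim_states \<Longrightarrow> sim_perm t (state_index s) = state_index (sim_step t s)"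
  using bij_betw_inv_into_left[OF bij_betw_state_index] by (simp add: sim_perm_def)

lemma bij_betw_sim_perm: "bij_betw (sim_perm t) {..<2 ^ sim_qubits} {..<2 ^ sim_qubits}"
  using bij_betw_state_index bij_betw_sim_step sim_perm_state_index by (rule bij_betw_conjugate)

lemma sim_statesE:
  assumes "s \<in> sim_states"
  obtains x j d ds where "s = (x, j, d # ds)" and "x < 2 ^ mt" and "j < 2 ^ \<kappa>" and "d < 2 ^ w"
    and "ds \<in> registers w (\<kappa> - 1)"
  using assms \<kappa>_pos
  by (cases s) (auto simp: sim_states_def registers_def length_Suc_conv gr0_conv_Suc)

lemma sim_query_step_in: "sim_query_step f \<in> sim_states \<rightarrow> sim_states"
proof
  fix s assume "s \<in> sim_states"
  then show "sim_query_step f s \<in> sim_states"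
    by (rule sim_statesE) (use \<kappa>_pos in \<open>auto simp: sim_query_step_def sim_states_def registers_def\<close>)
qed

lemma query_perm_sim_query:
  assumes "s \<in> sim_states"
  shows "query_perm sim_query f (state_index s) = state_index (sim_query_step f s)"
proof -
  obtain x j d ds where s: "s = (x, j, d # ds)" and x: "x < 2 ^ mt" and j: "j < 2 ^ \<kappa>"
    and d: "d < 2 ^ w" and ds: "ds \<in> registers w (\<kappa> - 1)"
    using assms by (rule sim_statesE)
  define r where "r = w * (\<kappa> - 1)"
  define i where "i = tensor_index \<kappa> (x, j)"
  have r: "w * \<kappa> = w + r" and m: "sim_qubits = (mt + \<kappa>) + w + r" and len: "length ds = \<kappa> - 1"
    using \<kappa>_pos ds by (simp_all add: r_def sim_qubits_def registers_def algebra_simps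
        flip: mult_Suc_right)
  have y: "register_index w ds < 2 ^ r"
    using bij_betw_apply[OF bij_betw_register_index ds] by (simp add: r_def)
  have i: "i < 2 ^ (mt + \<kappa>)" "i div 2 ^ \<kappa> = x" "i mod 2 ^ \<kappa> = j"
    using tensor_index_less[OF x j] j by (simp_all add: i_def)
  have assoc: "tensor_index (w + r) (i, v) = tensor_index (\<kappa> + w * \<kappa>) (x, tensor_index (w * \<kappa>) (j, v))"
    for v unfolding i_def r by (rule tensor_index_assoc[symmetric])
  have index: "state_index (x, j, a # ds) = tensor_index (w + r) (i, tensor_index r (a, register_index w ds))"
    for a unfolding assoc by (simp add: state_index_def len r_def)
  have "query_perm sim_query f (state_index s) = tensor_index (w + r) (i, tensor_index r
      (if i \<in> {i. i < 2 ^ (mt + \<kappa>) \<and> target_index (i div 2 ^ \<kappa>) \<in> Zt \<and> i mod 2 ^ \<kappa> < \<kappa>}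
       then (d + \<beta> (f (\<eta> (i mod 2 ^ \<kappa>) (\<tau>t (target_index (i div 2 ^ \<kappa>)))))) mod 2 ^ w else d,
       register_index w ds))"
    unfolding s index sim_query_def by (rule query_perm_tensor_index[OF m d y])
  then show ?thesis
    by (simp add: s i sim_query_step_def index)
qed

lemma m_query_sim_query [simp]: "m_query sim_query = sim_qubits"
  by (simp add: sim_query_def m_query_def)

lemma sim_query_layout: "(mt + \<kappa>) + w \<le> sim_qubits"
  using \<kappa>_pos by (simp add: sim_qubits_def)

lemma sim_step_in: "sim_step t \<in> sim_states \<rightarrow> sim_states"
  by (rule bij_betw_imp_funcset[OF bij_betw_sim_step])

lemma alg_mat_sim_alg_unit_vec:
  assumes "s \<in> sim_states"
  shows "alg_mat sim_alg f *\<^sub>v unit_vec (2 ^ sim_qubits) (state_index s)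
    = unit_vec (2 ^ sim_qubits) (state_index (alg_run sim_step (sim_query_step f) (2 * \<kappa>) s))"
proof -
  let ?N = "2 ^ sim_qubits"
  have "bij_betw (query_perm sim_query f) {..<?N} {..<?N}"
    unfolding sim_query_def by (rule bij_betw_query_perm[OF sim_query_layout])
  then have q: "query_perm sim_query f \<in> {..<?N} \<rightarrow> {..<?N}" by (rule bij_betw_imp_funcset)
  have \<sigma>: "sim_perm t \<in> {..<?N} \<rightarrow> {..<?N}" for t
    using bij_betw_sim_perm by (rule bij_betw_imp_funcset)
  have "alg_mat sim_alg f = perm_mat ?N (alg_run sim_perm (query_perm sim_query f) (2 * \<kappa>))"
    unfolding sim_alg_def by (rule alg_mat_perm_mat[OF _ \<sigma> q]) simp
  moreover have "alg_run sim_perm (query_perm sim_query f) (2 * \<kappa>) (state_index s)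
      = state_index (alg_run sim_step (sim_query_step f) (2 * \<kappa>) s)"
    by (rule alg_run_conjugate[OF sim_perm_state_index query_perm_sim_query sim_step_in
          sim_query_step_in assms])
  moreover have "state_index s' < ?N" if "s' \<in> sim_states" for s'
    using bij_betw_apply[OF bij_betw_state_index that] by simp
  moreover have "alg_run sim_step (sim_query_step f) (2 * \<kappa>) s \<in> sim_states"
    by (rule alg_run_in[OF sim_step_in sim_query_step_in assms])
  ultimately show ?thesis
    using assms by (simp add: perm_mat_mult_unit_vec)
qed

definition answers :: "('d \<Rightarrow> 'k) \<Rightarrow> nat \<Rightarrow> nat list" where
  "answers f x = map (\<lambda>j. if target_index x \<in> Zt then \<beta> (f (\<eta> j (\<tau>t (target_index x)))) else 0) [0..<\<kappa>]"

lemma length_answers [simp]: "length (answers f x) = \<kappa>"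
  by (simp add: answers_def)

lemma answers_nth_less: "set (answers f x) \<subseteq> {..<2 ^ w} \<Longrightarrow> j < \<kappa> \<Longrightarrow> answers f x ! j < 2 ^ w"
  by (metis length_answers lessThan_iff nth_mem subsetD)

lemma sim_query_step_answers:
  assumes "j < \<kappa>" and "target_index y = target_index x" and "ds \<noteq> []" and "hd ds < 2 ^ w"
  shows "sim_query_step f (y, j, ds) = (y, j, (hd ds + answers f x ! j) mod 2 ^ w # tl ds)"
  using assms by (simp add: sim_query_step_def answers_def)

lemma sim_run_compute:
  assumes answers: "set (answers f x) \<subseteq> {..<2 ^ w}" and "t < \<kappa>"
  shows "alg_run sim_step (sim_query_step f) t (x, 0, replicate \<kappa> 0)
    = (x, t, replicate (\<kappa> - t) 0 @ take t (answers f x))"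
  using \<open>t < \<kappa>\<close>
proof (induction t)
  case 0
  show ?case by (simp add: sim_step_def)
next
  case (Suc t)
  let ?v = "answers f x"
  have vt: "?v ! t < 2 ^ w" using answers Suc.prems by (simp add: answers_nth_less)
  have "sim_query_step f (x, t, replicate (\<kappa> - t) 0 @ take t ?v)
      = (x, t, (hd (replicate (\<kappa> - t) 0 @ take t ?v) + ?v ! t) mod 2 ^ w
          # tl (replicate (\<kappa> - t) 0 @ take t ?v))"
    using Suc.prems by (intro sim_query_step_answers) simp_all
  moreover have "negate_hd w (replicate (\<kappa> - Suc t) 0 @ xs) = replicate (\<kappa> - Suc t) 0 @ xs" for xs
    using Suc.prems by (cases "\<kappa> - Suc t") simp_all
  ultimately show ?case
    using Suc rotate1_fill_register[of t ?v w] vt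
    by (simp add: sim_step_def cycle_succ_def)
qed

lemma sim_run_middle:
  assumes answers: "set (answers f x) \<subseteq> {..<2 ^ w}"
  shows "alg_run sim_step (sim_query_step f) \<kappa> (x, 0, replicate \<kappa> 0)
    = (query_perm target_query (\<lambda>s. \<rho> s (answers f x)) x, 0, negate_hd w (answers f x))"
proof -
  let ?v = "answers f x"
  define t where "t = \<kappa> - 1"
  have t: "t < \<kappa>" and Suc_t: "Suc t = \<kappa>" using \<kappa>_pos by (simp_all add: t_def)
  let ?ds = "replicate (\<kappa> - t) 0 @ take t ?v"
  have "sim_query_step f (alg_run sim_step (sim_query_step f) t (x, 0, replicate \<kappa> 0))
      = sim_query_step f (x, t, ?ds)"
    by (simp only: sim_run_compute[OF answers t])
  also have "\<dots> = (x, t, (hd ?ds + ?v ! t) mod 2 ^ w # tl ?ds)"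
    using t by (intro sim_query_step_answers) simp_all
  finally have step: "sim_query_step f (alg_run sim_step (sim_query_step f) t (x, 0, replicate \<kappa> 0))
      = (x, t, (hd ?ds + ?v ! t) mod 2 ^ w # tl ?ds)" .
  have "rotate1 ((hd ?ds + ?v ! t) mod 2 ^ w # tl ?ds) = ?v"
    using rotate1_fill_register[of t ?v w] answers_nth_less[OF answers t] t Suc_t by simp
  moreover have "alg_run sim_step (sim_query_step f) \<kappa> (x, 0, replicate \<kappa> 0)
      = sim_step \<kappa> (sim_query_step f (alg_run sim_step (sim_query_step f) t (x, 0, replicate \<kappa> 0)))"
    using alg_run.simps(2)[of sim_step "sim_query_step f" t] Suc_t by simp
  ultimately show ?thesis
    using \<kappa>_pos Suc_t by (simp add: step sim_step_def cycle_succ_def)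
qed

lemma sim_run_uncompute:
  assumes answers: "set (answers f x) \<subseteq> {..<2 ^ w}" and "t \<le> \<kappa>"
  shows "alg_run sim_step (sim_query_step f) (\<kappa> + t) (x, 0, replicate \<kappa> 0)
    = (query_perm target_query (\<lambda>s. \<rho> s (answers f x)) x, t mod \<kappa>,
       negate_hd w (drop t (answers f x) @ replicate t 0))"
  using \<open>t \<le> \<kappa>\<close>
proof (induction t)
  case 0
  show ?case using sim_run_middle[OF answers] by simp
next
  case (Suc t)
  let ?v = "answers f x"
  let ?y = "query_perm target_query (\<lambda>s. \<rho> s ?v) x"
  let ?ds = "negate_hd w (drop t ?v @ replicate t 0)"
  have t: "t < \<kappa>" using Suc.prems by simp
  have ds: "?ds = (2 ^ w - ?v ! t) mod 2 ^ w # drop (Suc t) ?v @ replicate t 0"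
    using t by (simp add: Cons_nth_drop_Suc[symmetric])
  have "target_index ?y = target_index x"
    unfolding target_index_def by (rule query_perm_div[OF target_layout])
  then have "sim_query_step f (?y, t, ?ds) = (?y, t, (hd ?ds + ?v ! t) mod 2 ^ w # tl ?ds)"
    using t ds by (intro sim_query_step_answers) simp_all
  moreover have "rotate1 ((hd ?ds + ?v ! t) mod 2 ^ w # tl ?ds) = drop (Suc t) ?v @ replicate (Suc t) 0"
    using rotate1_clear_register[of t ?v w] answers_nth_less[OF answers t] t by simp
  ultimately show ?case
    using Suc t by (simp add: sim_step_def cycle_succ_def)
qed

lemma sim_run:
  assumes "set (answers f x) \<subseteq> {..<2 ^ w}"
  shows "alg_run sim_step (sim_query_step f) (2 * \<kappa>) (x, 0, replicate \<kappa> 0)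
    = (query_perm target_query (\<lambda>s. \<rho> s (answers f x)) x, 0, replicate \<kappa> 0)"
  using sim_run_uncompute[OF assms, of \<kappa>] by (simp add: mult_2)

lemma pad_ket_eq_unit_vec_state_index:
  assumes "y < 2 ^ mt"
  shows "pad (sim_qubits - mt) (ket (2 ^ mt) y) = unit_vec (2 ^ sim_qubits) (state_index (y, 0, replicate \<kappa> 0))"
proof -
  have "sim_qubits - mt = \<kappa> + w * \<kappa>" and "2 ^ mt * 2 ^ (\<kappa> + w * \<kappa>) = (2::nat) ^ sim_qubits"
    by (simp_all add: sim_qubits_def power_add)
  then show ?thesis
    using assms by (simp add: ket_def pad_unit_vec state_index_def tensor_index_def)
qed

lemma sim_alg_pad_ket:
  assumes "x < 2 ^ mt" and "set (answers f x) \<subseteq> {..<2 ^ w}"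
  shows "alg_mat sim_alg f *\<^sub>v pad (sim_qubits - mt) (ket (2 ^ mt) x)
    = pad (sim_qubits - mt) (ket (2 ^ mt) (query_perm target_query (\<lambda>s. \<rho> s (answers f x)) x))"
proof -
  have "(x, 0, replicate \<kappa> 0) \<in> sim_states"
    using assms(1) \<kappa>_pos by (simp add: sim_states_def registers_def)
  moreover have "query_perm target_query (\<lambda>s. \<rho> s (answers f x)) x < 2 ^ mt"
    using bij_betw_apply[OF bij_betw_query_perm[OF target_layout]] assms(1) by simp
  ultimately show ?thesis
    using assms by (simp add: pad_ket_eq_unit_vec_state_index alg_mat_sim_alg_unit_vec sim_run)
qed

lemma is_query_sim_query:
  assumes target: "is_query Dt Kt target_query" and \<eta>: "\<forall>j<\<kappa>. \<eta> j \<in> Dt \<rightarrow> D"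
    and \<beta>: "\<beta> \<in> K \<rightarrow> {..<2 ^ w}" and w: "1 \<le> w"
  shows "is_query D K sim_query"
proof -
  let ?Z = "{i. i < 2 ^ (mt + \<kappa>) \<and> target_index (i div 2 ^ \<kappa>) \<in> Zt \<and> i mod 2 ^ \<kappa> < \<kappa>}"
  from target have Zt: "Zt \<noteq> {}" "Zt \<subseteq> {..<2 ^ mt1}" and \<tau>t: "\<tau>t \<in> Zt \<rightarrow> Dt"
    by (simp_all add: is_query_def)
  then obtain i where i: "i \<in> Zt" "i < 2 ^ mt1" by blast
  have "i * 2 ^ (mt - mt1) < 2 ^ mt1 * 2 ^ (mt - mt1)" using i by simp
  also have "\<dots> = 2 ^ mt" using target_layout by (simp flip: power_add)
  finally have "tensor_index \<kappa> (i * 2 ^ (mt - mt1), 0) < 2 ^ (mt + \<kappa>)"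
    by (intro tensor_index_less) simp_all
  then have "tensor_index \<kappa> (i * 2 ^ (mt - mt1), 0) \<in> ?Z"
    using i \<kappa>_pos by (simp add: target_index_def)
  then have "?Z \<noteq> {}" by blast
  moreover have "?Z \<subseteq> {..<2 ^ (mt + \<kappa>)}" by auto
  moreover have "(\<lambda>i. \<eta> (i mod 2 ^ \<kappa>) (\<tau>t (target_index (i div 2 ^ \<kappa>)))) \<in> ?Z \<rightarrow> D"
  proof
    fix i assume i: "i \<in> ?Z"
    then have "\<tau>t (target_index (i div 2 ^ \<kappa>)) \<in> Dt" by (intro funcset_mem[OF \<tau>t]) simp
    moreover have "\<eta> (i mod 2 ^ \<kappa>) \<in> Dt \<rightarrow> D" using \<eta> i by simp
    ultimately show "\<eta> (i mod 2 ^ \<kappa>) (\<tau>t (target_index (i div 2 ^ \<kappa>))) \<in> D"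
      by (rule funcset_mem[rotated])
  qed
  moreover have "1 \<le> sim_qubits" and "1 \<le> mt + \<kappa>" using \<kappa>_pos by (simp_all add: sim_qubits_def)
  ultimately show ?thesis
    using sim_query_layout \<beta> w unfolding is_query_def sim_query_def prod.case by blast
qed

lemma m_alg_sim_alg [simp]: "m_alg sim_alg = sim_qubits"
  by (simp add: m_alg_def sim_alg_def)

lemma is_alg_sim_alg: "is_query D K sim_query \<Longrightarrow> is_alg D K sim_alg"
  by (auto simp: is_alg_def sim_alg_def unitary_perm_mat bij_betw_sim_perm)

lemma set_answers_subset:
  assumes f: "f \<in> D \<rightarrow>\<^sub>E K" and \<eta>: "\<forall>j<\<kappa>. \<eta> j \<in> Dt \<rightarrow> D" and \<beta>: "\<beta> \<in> K \<rightarrow> {..<2 ^ w}"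
    and \<tau>t: "\<tau>t \<in> Zt \<rightarrow> Dt"
  shows "set (answers f x) \<subseteq> {..<2 ^ w}"
proof -
  have "\<beta> (f (\<eta> j (\<tau>t (target_index x)))) < 2 ^ w" if "target_index x \<in> Zt" and "j < \<kappa>" for j
  proof -
    have "\<eta> j \<in> Dt \<rightarrow> D" using \<eta> that(2) by simp
    then have "\<eta> j (\<tau>t (target_index x)) \<in> D" using funcset_mem[OF \<tau>t that(1)] by (rule funcset_mem)
    then have "f (\<eta> j (\<tau>t (target_index x))) \<in> K" using f by (rule PiE_mem[rotated])
    then have "\<beta> (f (\<eta> j (\<tau>t (target_index x)))) \<in> {..<2 ^ w}" by (rule funcset_mem[OF \<beta>])
    then show ?thesis by simp
  qed
  then show ?thesis by (auto simp: answers_def)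
qed

lemma query_perm_reduction:
  assumes g: "\<forall>s \<in> Dt. g s = \<rho> s (map (\<lambda>j. \<beta> (f (\<eta> j s))) [0..<\<kappa>])" and \<tau>t: "\<tau>t \<in> Zt \<rightarrow> Dt"
  shows "query_perm target_query g x = query_perm target_query (\<lambda>s. \<rho> s (answers f x)) x"
proof (rule query_perm_cong)
  assume i: "x div 2 ^ (mt - mt1) \<in> Zt"
  then have "\<tau>t (x div 2 ^ (mt - mt1)) \<in> Dt" by (rule funcset_mem[OF \<tau>t])
  then show "g (\<tau>t (x div 2 ^ (mt - mt1))) = \<rho> (\<tau>t (x div 2 ^ (mt - mt1))) (answers f x)"
    using g i by (simp add: answers_def target_index_def)
qed

theorem sim_alg_simulates:
  assumes F: "F \<subseteq> D \<rightarrow>\<^sub>E K" and \<eta>: "\<forall>j<\<kappa>. \<eta> j \<in> Dt \<rightarrow> D"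
    and \<beta>: "\<beta> \<in> K \<rightarrow> {..<2 ^ w}" and w: "1 \<le> w"
    and \<Gamma>: "\<forall>f \<in> F. \<forall>s \<in> Dt. \<Gamma> f s = \<rho> s (map (\<lambda>j. \<beta> (f (\<eta> j s))) [0..<\<kappa>])"
    and target: "is_query Dt Kt target_query"
  shows "is_alg D K sim_alg \<and> n_q sim_alg = 2 * \<kappa> \<and> m_alg sim_alg > mt \<and>
    (\<forall>f \<in> F. \<forall>x < 2 ^ mt.
       pad (m_alg sim_alg - mt) (query_mat target_query (\<Gamma> f) *\<^sub>v ket (2 ^ mt) x)
       = alg_mat sim_alg f *\<^sub>v pad (m_alg sim_alg - mt) (ket (2 ^ mt) x))"
proof (intro conjI ballI allI impI)
  show "is_alg D K sim_alg"
    using is_query_sim_query[OF target \<eta> \<beta> w] by (rule is_alg_sim_alg)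
  show "n_q sim_alg = 2 * \<kappa>" by (simp add: n_q_def sim_alg_def)
  show "m_alg sim_alg > mt" using \<kappa>_pos by (simp add: sim_qubits_def)
  fix f and x :: nat assume f: "f \<in> F" and x: "x < 2 ^ mt"
  from target have \<tau>t: "\<tau>t \<in> Zt \<rightarrow> Dt" by (simp add: is_query_def)
  have answers: "set (answers f x) \<subseteq> {..<2 ^ w}"
    using subsetD[OF F f] \<eta> \<beta> \<tau>t by (rule set_answers_subset)
  have "query_perm target_query (\<Gamma> f) x = query_perm target_query (\<lambda>s. \<rho> s (answers f x)) x"
    using \<Gamma> f \<tau>t by (intro query_perm_reduction) simp_all
  moreover note query_mat_mult_ket[OF target_layout x, where g = "\<Gamma> f"]
  ultimately show "pad (m_alg sim_alg - mt) (query_mat target_query (\<Gamma> f) *\<^sub>v ket (2 ^ mt) x)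
      = alg_mat sim_alg f *\<^sub>v pad (m_alg sim_alg - mt) (ket (2 ^ mt) x)"
    using sim_alg_pad_ket[OF x answers] by simp
qed

end

theorem lemma1:
  fixes D :: "'d set" and K :: "'k set" and Dt :: "'e set" and Kt :: "'l set"
    and F :: "('d \<Rightarrow> 'k) set" and Ft :: "('e \<Rightarrow> 'l) set"
    and \<Gamma> :: "('d \<Rightarrow> 'k) \<Rightarrow> ('e \<Rightarrow> 'l)"
    and \<kappa> mstar :: nat and \<eta> :: "nat \<Rightarrow> 'e \<Rightarrow> 'd" and \<beta> :: "'k \<Rightarrow> nat"
    and \<rho> :: "'e \<Rightarrow> nat list \<Rightarrow> 'l"
    and Qt :: "('e, 'l) qquery"
  assumes "D \<noteq> {}" and "K \<noteq> {}" and "Dt \<noteq> {}" and "Kt \<noteq> {}"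
    and "F \<noteq> {}" and "F \<subseteq> D \<rightarrow>\<^sub>E K" and "Ft \<noteq> {}" and "Ft \<subseteq> Dt \<rightarrow>\<^sub>E Kt"
    and "\<Gamma> \<in> F \<rightarrow> Ft"
    and "\<kappa> \<ge> 1" and "mstar \<ge> 1"
    and "\<forall>j < \<kappa>. \<eta> j \<in> Dt \<rightarrow> D"
    and "\<beta> \<in> K \<rightarrow> {..<2 ^ mstar}"
    and "\<forall>s \<in> Dt. \<forall>ys. length ys = \<kappa> \<and> set ys \<subseteq> {..<2 ^ mstar} \<longrightarrow> \<rho> s ys \<in> Kt"
    and "\<forall>f \<in> F. \<forall>s \<in> Dt. \<Gamma> f s = \<rho> s (map (\<lambda>j. \<beta> (f (\<eta> j s))) [0..<\<kappa>])"
    and "is_query Dt Kt Qt"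
  shows "\<exists>B. is_alg D K B \<and> n_q B = 2 * \<kappa> \<and> m_alg B > m_query Qt \<and>
    (\<forall>f \<in> F. \<forall>x < 2 ^ m_query Qt.
       pad (m_alg B - m_query Qt) (query_mat Qt (\<Gamma> f) *\<^sub>v ket (2 ^ m_query Qt) x)
       = alg_mat B f *\<^sub>v pad (m_alg B - m_query Qt) (ket (2 ^ m_query Qt) x))"
proof -
  obtain mt mt1 mt2 Zt \<tau>t \<beta>t where Qt: "Qt = (mt, mt1, mt2, Zt, \<tau>t, \<beta>t)"
    by (cases Qt) blast
  interpret query_simulation mt mt1 mt2 Zt \<tau>t \<beta>t \<kappa> mstar \<eta> \<beta> \<rho>
    using assms(10,16) by unfold_locales (simp_all add: Qt is_query_def)
  have "is_alg D K sim_alg \<and> n_q sim_alg = 2 * \<kappa> \<and> m_alg sim_alg > mt \<and>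
    (\<forall>f \<in> F. \<forall>x < 2 ^ mt.
       pad (m_alg sim_alg - mt) (query_mat target_query (\<Gamma> f) *\<^sub>v ket (2 ^ mt) x)
       = alg_mat sim_alg f *\<^sub>v pad (m_alg sim_alg - mt) (ket (2 ^ mt) x))"
    using assms(16) unfolding Qt by (rule sim_alg_simulates[OF assms(6,12,13,11,15)])
  moreover have "m_query Qt = mt" by (simp add: Qt m_query_def)
  ultimately show ?thesis unfolding Qt by (intro exI[of _ sim_alg]) simp
qed

end
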